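(* There exist an absolute constant $\delta > 0$ and a sequence of compact rectifiable sets $E_n \subset [0,1]^2 \subset \mathbb{R}^2$ ($n \geq 2$) such that: (1) $\mathcal{H}^1(E_n) = 1$; (2) $\mathrm{Fav}(E_n) \geq \delta$; (3) there is an absolute constant $c > 0$ such that for any $\alpha \in [2n^{-2},1)$ and any curve $\Gamma$ with $\mathcal{H}^1(\Gamma \cap E_n) \geq \alpha$ we have $\mathcal{H}^1(\Gamma) \geq c\,\alpha n$. In particular, for every $M \geq 1$ and every $M$-Lipschitz graph $\Gamma$, $\mathcal{H}^1(\Gamma \cap E_n) \leq C M n^{-1}$ for an absolute constant $C$.
   Context: For $\theta\in[0,\pi)$, $\pi_\theta(x) = x\cdot(\cos\theta,\sin\theta)$ and $\mathrm{Fav}(E) = \int_0^\pi \mathcal{H}^1(\pi_\theta(E))\,d\theta$. A curve is a continuous image of a compact interval. An $M$-Lipschitz graph is a set $\{tu + f(t)u^\perp : t \in A\}$ with $u,u^\perp$ orthonormal, $A\subset\mathbb{R}$, $f$ $M$-Lipschitz. *)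

theory Defs
  imports "HOL-Analysis.Analysis"
begin

text \<open>One-dimensional Hausdorff (outer) measure on a metric space, via the
  Caratheodory construction with countable covers by bounded sets of small diameter
  (normalisation: H^1 of a segment is its length).\<close>

definition hausdorff_pre1 :: "real \<Rightarrow> 'a::metric_space set \<Rightarrow> ennreal" where
  "hausdorff_pre1 d E =
     (INF U \<in> {U :: nat \<Rightarrow> 'a set. E \<subseteq> (\<Union>i. U i) \<and>
                 (\<forall>i. bounded (U i) \<and> diameter (U i) \<le> d)}.
        (\<Sum>i. ennreal (diameter (U i))))"

definition H1 :: "'a::metric_space set \<Rightarrow> ennreal" where
  "H1 E = (SUP d \<in> {0<..}. hausdorff_pre1 d E)"

definition proj :: "real \<Rightarrow> real \<times> real \<Rightarrow> real" where
  "proj t x = fst x * cos t + snd x * sin t"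

definition Fav :: "(real \<times> real) set \<Rightarrow> ennreal" where
  "Fav E = (\<integral>\<^sup>+ t \<in> {0..<pi}. H1 (proj t ` E) \<partial>lborel)"

definition rectifiable_set :: "(real \<times> real) set \<Rightarrow> bool" where
  "rectifiable_set E \<longleftrightarrow>
     (\<exists>f :: nat \<Rightarrow> real \<Rightarrow> real \<times> real. (\<forall>i. \<exists>L. lipschitz_on L UNIV (f i)) \<and>
        H1 (E - (\<Union>i. range (f i))) = 0)"

definition is_curve_set :: "(real \<times> real) set \<Rightarrow> bool" where
  "is_curve_set G \<longleftrightarrow> (\<exists>(g :: real \<Rightarrow> real \<times> real) a b. a \<le> b \<and> continuous_on {a..b} g \<and> G = g ` {a..b})"

definition lipschitz_graph :: "real \<Rightarrow> (real \<times> real) set \<Rightarrow> bool" where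
  "lipschitz_graph M G \<longleftrightarrow>
     (\<exists>u v (A :: real set) f. norm u = 1 \<and> norm v = 1 \<and> inner u v = 0 \<and>
        lipschitz_on M A f \<and> G = (\<lambda>t. t *\<^sub>R u + f t *\<^sub>R v) ` A)"

end

theory Submission
  imports Defs
begin

text \<open>
  \<open>E\<^sub>n = staircase n\<close> consists of \<open>n\<^sup>2\<close> horizontal pieces of length \<open>1 / n\<^sup>2\<close>, any two
  of them at distance at least \<open>1 / (2 n)\<close>. A set meeting \<open>E\<^sub>n\<close> in \<open>H\<^sup>1\<close>-measure \<open>\<alpha>\<close>
  meets at least \<open>\<alpha> n\<^sup>2\<close> pieces; choosing one point in each gives \<open>1 / (2 n)\<close>-separated points.

  A connected set through \<open>k \<ge> 2\<close> such points carries \<open>H\<^sup>1\<close>-measure at least \<open>1 / (8 n)\<close> in each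
  of the \<open>k\<close> disjoint balls of radius \<open>1 / (8 n)\<close> around them, so a curve has length at least
  \<open>\<alpha> n / 8\<close>. On an \<open>M\<close>-Lipschitz graph the parameters of the points are
  \<open>1 / (2 (1 + M) n)\<close>-separated in an interval of length \<open>4\<close>, so there are \<open>O(M n)\<close> of them and
  \<open>H\<^sup>1(\<Gamma> \<inter> E\<^sub>n) = O(M / n)\<close>.

  In a direction \<open>\<theta> \<in> [0, \<pi>/4]\<close> the projection of the piece in column \<open>i\<close> and row \<open>j\<close> starts at
  \<open>cos \<theta> / n\<^sup>2 * (i n + j + j n tan \<theta>)\<close>. Unless \<open>tan \<theta>\<close> falls into one of the windows of
  width \<open>2 / (b n)\<close> around the rationals \<open>-(a n + b) / (b n)\<close>, which cover directions of measure at
  most \<open>1 / 4\<close>, these starting points are \<open>cos \<theta> / n\<^sup>2\<close> apart for all rows \<open>j < n / 24\<close>. The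
  projections of those \<open>n\<^sup>2 / 24\<close> pieces are then disjoint, of total length at least \<open>1 / 48\<close>.
\<close>

section \<open>One-dimensional Hausdorff measure\<close>

lemma hausdorff_pre1_le_cover:
  assumes "A \<subseteq> (\<Union>i. U i)" "\<And>i. bounded (U i)" "\<And>i. diameter (U i) \<le> d"
  shows "hausdorff_pre1 d A \<le> (\<Sum>i. ennreal (diameter (U i)))"
  unfolding hausdorff_pre1_def by (rule INF_lower) (use assms in auto)

lemma hausdorff_pre1_greatest:
  assumes "\<And>U. A \<subseteq> (\<Union>i. U i) \<Longrightarrow> (\<And>i. bounded (U i)) \<Longrightarrow> (\<And>i. diameter (U i) \<le> d)
             \<Longrightarrow> X \<le> (\<Sum>i. ennreal (diameter (U i)))"
  shows "X \<le> hausdorff_pre1 d A"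
  unfolding hausdorff_pre1_def by (rule INF_greatest) (use assms in auto)

lemma hausdorff_pre1_mono: "A \<subseteq> B \<Longrightarrow> hausdorff_pre1 d A \<le> hausdorff_pre1 d B"
  by (rule hausdorff_pre1_greatest, rule hausdorff_pre1_le_cover) auto

lemma hausdorff_pre1_antimono: "d' \<le> d \<Longrightarrow> hausdorff_pre1 d A \<le> hausdorff_pre1 d' A"
  by (rule hausdorff_pre1_greatest, rule hausdorff_pre1_le_cover) (auto intro: order_trans)

lemma hausdorff_pre1_le_H1: "d > 0 \<Longrightarrow> hausdorff_pre1 d A \<le> H1 A"
  unfolding H1_def by (rule SUP_upper) auto

lemma H1_least: "(\<And>d. d > 0 \<Longrightarrow> hausdorff_pre1 d A \<le> X) \<Longrightarrow> H1 A \<le> X"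
  unfolding H1_def by (rule SUP_least) auto

lemma H1_mono: "A \<subseteq> B \<Longrightarrow> H1 A \<le> H1 B"
  unfolding H1_def by (rule SUP_mono) (use hausdorff_pre1_mono in blast)

lemma H1_empty [simp]: "H1 {} = 0"
proof -
  have "H1 {} \<le> 0"
    by (rule H1_least, rule order_trans, rule hausdorff_pre1_le_cover[of _ "\<lambda>_. {}"]) auto
  then show ?thesis by simp
qed

lemma diameter_le_of_dist_le:
  fixes S :: "'a::metric_space set"
  assumes "0 \<le> r" "\<And>x y. x \<in> S \<Longrightarrow> y \<in> S \<Longrightarrow> dist x y \<le> r"
  shows "diameter S \<le> r"
  using assms unfolding diameter_def by (auto intro: cSUP_least)

lemma bounded_diameter_contraction_image:
  fixes f :: "'a::metric_space \<Rightarrow> 'b::metric_space"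
  assumes contr: "\<And>x y. x \<in> S \<Longrightarrow> y \<in> S \<Longrightarrow> dist (f x) (f y) \<le> dist x y"
    and "bounded U"
  shows "bounded (f ` (U \<inter> S))" "diameter (f ` (U \<inter> S)) \<le> diameter U"
proof -
  have "dist x y \<le> diameter U" if "x \<in> f ` (U \<inter> S)" "y \<in> f ` (U \<inter> S)" for x y
    using that contr diameter_bounded_bound[OF \<open>bounded U\<close>] by (blast intro: order_trans)
  then show "bounded (f ` (U \<inter> S))" "diameter (f ` (U \<inter> S)) \<le> diameter U"
    by (auto simp: bounded_two_points diameter_ge_0[OF \<open>bounded U\<close>] intro: diameter_le_of_dist_le)
qed

lemma H1_contraction_image_le:
  fixes f :: "'a::metric_space \<Rightarrow> 'b::metric_space"
  assumes contr: "\<And>x y. x \<in> S \<Longrightarrow> y \<in> S \<Longrightarrow> dist (f x) (f y) \<le> dist x y"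
  shows "H1 (f ` S) \<le> H1 S"
proof (rule H1_least)
  fix d :: real assume "d > 0"
  have "hausdorff_pre1 d (f ` S) \<le> hausdorff_pre1 d S"
  proof (rule hausdorff_pre1_greatest)
    fix U :: "nat \<Rightarrow> 'a set"
    assume cover: "S \<subseteq> (\<Union>i. U i)" "\<And>i. bounded (U i)" "\<And>i. diameter (U i) \<le> d"
    note image = bounded_diameter_contraction_image[OF contr cover(2)]
    have "hausdorff_pre1 d (f ` S) \<le> (\<Sum>i. ennreal (diameter (f ` (U i \<inter> S))))"
    proof (rule hausdorff_pre1_le_cover)
      show "f ` S \<subseteq> (\<Union>i. f ` (U i \<inter> S))" using cover(1) by blast
      show "diameter (f ` (U i \<inter> S)) \<le> d" for i using image(2) cover(3) by (rule order_trans)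
    qed (rule image(1))
    also have "\<dots> \<le> (\<Sum>i. ennreal (diameter (U i)))"
      by (intro suminf_le ennreal_leI image) auto
    finally show "hausdorff_pre1 d (f ` S) \<le> (\<Sum>i. ennreal (diameter (U i)))" .
  qed
  also have "\<dots> \<le> H1 S" by (rule hausdorff_pre1_le_H1) fact
  finally show "hausdorff_pre1 d (f ` S) \<le> H1 S" .
qed

lemma bounded_real_Icc_Inf_Sup:
  fixes U :: "real set"
  assumes "bounded U" "U \<noteq> {}"
  shows "U \<subseteq> {Inf U..Sup U}" "Sup U - Inf U \<le> diameter U"
proof -
  show "U \<subseteq> {Inf U..Sup U}"
    using cInf_lower[OF _ bounded_imp_bdd_below] cSup_upper[OF _ bounded_imp_bdd_above] assms(1)
    by auto
  have "Sup U \<le> x + diameter U" if "x \<in> U" for x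
  proof (rule cSup_least[OF \<open>U \<noteq> {}\<close>])
    fix y assume "y \<in> U"
    then have "dist x y \<le> diameter U" using diameter_bounded_bound[OF \<open>bounded U\<close> that] by auto
    then show "y \<le> x + diameter U" by (auto simp: dist_real_def abs_le_iff)
  qed
  then have "Sup U - diameter U \<le> Inf U"
    by (intro cInf_greatest[OF \<open>U \<noteq> {}\<close>]) force
  then show "Sup U - Inf U \<le> diameter U" by simp
qed

lemma emeasure_lborel_le_H1:
  fixes S :: "real set"
  shows "emeasure lborel S \<le> H1 S"
proof -
  have "emeasure lborel S \<le> hausdorff_pre1 1 S"
  proof (rule hausdorff_pre1_greatest)
    fix U :: "nat \<Rightarrow> real set"
    assume cover: "S \<subseteq> (\<Union>i. U i)" "\<And>i. bounded (U i)" "\<And>i. diameter (U i) \<le> 1"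
    define W where "W i = (if U i = {} then {} else {Inf (U i)..Sup (U i)})" for i
    note Icc = bounded_real_Icc_Inf_Sup[OF cover(2)]
    have W: "W i \<in> sets lborel" for i by (simp add: W_def)
    have "S \<subseteq> (\<Union>i. W i)"
    proof
      fix x assume "x \<in> S"
      then obtain i where "x \<in> U i" using cover(1) by blast
      moreover from this have "U i \<noteq> {}" by blast
      ultimately have "x \<in> W i" using Icc(1)[of i] unfolding W_def by auto
      then show "x \<in> (\<Union>i. W i)" by blast
    qed
    then have "emeasure lborel S \<le> emeasure lborel (\<Union>i. W i)"
      by (rule emeasure_mono) (use W in auto)
    also have "\<dots> \<le> (\<Sum>i. emeasure lborel (W i))"
      by (rule emeasure_subadditive_countably) (use W in auto)
    also have "\<dots> \<le> (\<Sum>i. ennreal (diameter (U i)))"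
    proof (intro suminf_le)
      show "emeasure lborel (W i) \<le> ennreal (diameter (U i))" for i
        using Icc[of i] by (cases "U i = {}") (auto simp: W_def intro: ennreal_leI)
    qed auto
    finally show "emeasure lborel S \<le> (\<Sum>i. ennreal (diameter (U i)))" .
  qed
  also have "\<dots> \<le> H1 S" by (rule hausdorff_pre1_le_H1) simp
  finally show ?thesis .
qed

lemma hausdorff_pre1_add_separated:
  fixes A B :: "'a::metric_space set"
  assumes sep: "\<And>x y. x \<in> A \<Longrightarrow> y \<in> B \<Longrightarrow> d < dist x y"
  shows "hausdorff_pre1 d A + hausdorff_pre1 d B \<le> hausdorff_pre1 d (A \<union> B)"
proof (rule hausdorff_pre1_greatest)
  fix U :: "nat \<Rightarrow> 'a set"
  assume cover: "A \<union> B \<subseteq> (\<Union>i. U i)" "\<And>i. bounded (U i)" "\<And>i. diameter (U i) \<le> d"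
  define UA where "UA i = (if U i \<inter> B = {} then U i else {})" for i
  define UB where "UB i = (if U i \<inter> B = {} then {} else U i)" for i
  have "U i \<inter> A = {}" if "U i \<inter> B \<noteq> {}" for i
    using that sep diameter_bounded_bound[OF cover(2)] cover(3)[of i] by (force simp: not_le[symmetric])
  then have "A \<subseteq> (\<Union>i. UA i)" "B \<subseteq> (\<Union>i. UB i)"
    using cover(1) by (auto simp: UA_def UB_def) blast+
  moreover have "bounded (UA i)" "bounded (UB i)" "diameter (UA i) \<le> d" "diameter (UB i) \<le> d" for i
    using cover(2,3)[of i] order_trans[OF diameter_ge_0 cover(3)[of i]] cover(2)
    by (auto simp: UA_def UB_def)
  ultimately have "hausdorff_pre1 d A + hausdorff_pre1 d B
      \<le> (\<Sum>i. ennreal (diameter (UA i))) + (\<Sum>i. ennreal (diameter (UB i)))"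
    by (intro add_mono hausdorff_pre1_le_cover)
  also have "\<dots> = (\<Sum>i. ennreal (diameter (UA i)) + ennreal (diameter (UB i)))"
    by (simp add: suminf_add)
  also have "\<dots> = (\<Sum>i. ennreal (diameter (U i)))"
    by (rule suminf_cong) (simp add: UA_def UB_def)
  finally show "hausdorff_pre1 d A + hausdorff_pre1 d B \<le> (\<Sum>i. ennreal (diameter (U i)))" .
qed

lemma H1_add_separated:
  fixes A B :: "'a::metric_space set"
  assumes "0 < r" and sep: "\<And>x y. x \<in> A \<Longrightarrow> y \<in> B \<Longrightarrow> r \<le> dist x y"
  shows "H1 A + H1 B \<le> H1 (A \<union> B)"
proof -
  have "H1 A + H1 B = (SUP d\<in>{0<..}. hausdorff_pre1 d A + hausdorff_pre1 d B)"
    unfolding H1_def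
  proof (rule SUP_add_directed_ennreal[symmetric])
    fix d1 d2 :: real assume "d1 \<in> {0<..}" "d2 \<in> {0<..}"
    then show "\<exists>d\<in>{0<..}. hausdorff_pre1 d1 A + hausdorff_pre1 d2 B \<le> hausdorff_pre1 d A + hausdorff_pre1 d B"
      by (intro bexI[of _ "min d1 d2"] add_mono hausdorff_pre1_antimono) auto
  qed
  also have "\<dots> \<le> H1 (A \<union> B)"
  proof (rule SUP_least)
    fix d :: real assume "d \<in> {0<..}"
    define e where "e = min d (r / 2)"
    have e: "0 < e" "e \<le> d" "e < r" using \<open>d \<in> {0<..}\<close> \<open>0 < r\<close> by (auto simp: e_def)
    have "hausdorff_pre1 d A + hausdorff_pre1 d B \<le> hausdorff_pre1 e A + hausdorff_pre1 e B"
      by (intro add_mono hausdorff_pre1_antimono e)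
    also have "\<dots> \<le> hausdorff_pre1 e (A \<union> B)"
      by (rule hausdorff_pre1_add_separated) (use sep e in force)
    also have "\<dots> \<le> H1 (A \<union> B)" by (rule hausdorff_pre1_le_H1) fact
    finally show "hausdorff_pre1 d A + hausdorff_pre1 d B \<le> H1 (A \<union> B)" .
  qed
  finally show ?thesis .
qed

lemma H1_sum_separated:
  fixes A :: "'i \<Rightarrow> 'a::metric_space set"
  assumes "finite K" "0 < r"
    and sep: "\<And>k k' x y. k \<in> K \<Longrightarrow> k' \<in> K \<Longrightarrow> k \<noteq> k' \<Longrightarrow> x \<in> A k \<Longrightarrow> y \<in> A k' \<Longrightarrow> r \<le> dist x y"
  shows "(\<Sum>k\<in>K. H1 (A k)) \<le> H1 (\<Union>k\<in>K. A k)"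
  using assms(1) sep
proof (induction K rule: finite_induct)
  case (insert k K)
  have "(\<Sum>k\<in>K. H1 (A k)) \<le> H1 (\<Union>k\<in>K. A k)"
    by (rule insert.IH) (use insert.prems in blast)
  then have "(\<Sum>k\<in>insert k K. H1 (A k)) \<le> H1 (A k) + H1 (\<Union>k\<in>K. A k)"
    using insert.hyps by (simp add: add_left_mono)
  also have "\<dots> \<le> H1 (A k \<union> (\<Union>k\<in>K. A k))"
    by (rule H1_add_separated[OF \<open>0 < r\<close>]) (use insert in blast)
  finally show ?case by simp
qed simp

lemma H1_connected_inter_ball:
  fixes S :: "'a::metric_space set"
  assumes "connected S" "p \<in> S" "q \<in> S" "0 < r" "r \<le> dist p q"
  shows "ennreal r \<le> H1 (S \<inter> ball p r)"
proof -
  have "connected (dist p ` S)"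
    by (rule connected_continuous_image[OF _ \<open>connected S\<close>]) (intro continuous_intros)
  then have "{0..dist p q} \<subseteq> dist p ` S"
    using assms(2,3) by (auto simp: connected_iff_interval)
  then have "{0..<r} \<subseteq> dist p ` (S \<inter> ball p r)"
    using assms(5) by force
  then have "H1 {0..<r} \<le> H1 (dist p ` (S \<inter> ball p r))" by (rule H1_mono)
  also have "\<dots> \<le> H1 (S \<inter> ball p r)"
    by (rule H1_contraction_image_le) (metis abs_dist_diff_le dist_commute dist_real_def)
  finally show ?thesis
    using emeasure_lborel_le_H1[of "{0..<r}"] \<open>0 < r\<close> by simp
qed

section \<open>The staircase sets\<close>

lemma mem_uniform_subinterval:
  fixes t l :: real
  assumes "t \<in> {0..l}" "0 < l" "0 < K"
  obtains k where "k < K" "t \<in> {real k * l / real K..(real k + 1) * l / real K}"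
proof (cases "t = l")
  case True
  then show ?thesis using assms by (intro that[of "K - 1"]) (auto simp: of_nat_diff field_simps)
next
  case False
  define k where "k = nat \<lfloor>t * K / l\<rfloor>"
  have "0 \<le> t * K / l" "t * K / l < K" using assms False by (auto simp: field_simps)
  then have "real k \<le> t * K / l" "t * K / l < real k + 1" "k < K"
    unfolding k_def by linarith+
  then show ?thesis using assms by (intro that[of k]) (auto simp: field_simps)
qed

definition horizontal_segment :: "real \<times> real \<Rightarrow> real \<Rightarrow> real \<Rightarrow> (real \<times> real) set" where
  "horizontal_segment c a b = (\<lambda>t. c + (t, 0)) ` {a..b}"

lemma bounded_horizontal_segment: "bounded (horizontal_segment c a b)"
  unfolding horizontal_segment_def
  by (intro compact_imp_bounded compact_continuous_image continuous_intros) simp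

lemma diameter_horizontal_segment_le:
  "a \<le> b \<Longrightarrow> diameter (horizontal_segment c a b) \<le> b - a"
  by (rule diameter_le_of_dist_le) (auto simp: horizontal_segment_def dist_Pair_Pair dist_real_def)

lemma hausdorff_pre1_UN_horizontal_segments_le:
  assumes "finite S" "0 < l" "0 < K"
  shows "hausdorff_pre1 (l / real K) (\<Union>m\<in>S. horizontal_segment (c m) 0 l) \<le> ennreal (real (card S) * l)"
proof -
  define N where "N = card S"
  obtain h where h: "bij_betw h {..<N} S"
    using ex_bij_betw_nat_finite[OF \<open>finite S\<close>] by (auto simp: N_def atLeast0LessThan)
  define U where "U i = (if i < N * K then horizontal_segment (c (h (i div K)))
      (real (i mod K) * l / real K) ((real (i mod K) + 1) * l / real K) else {})" for i
  have diam: "diameter (U i) \<le> l / real K" for i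
    using diameter_horizontal_segment_le[of "real (i mod K) * l / real K" "(real (i mod K) + 1) * l / real K"]
      \<open>0 < l\<close> \<open>0 < K\<close> by (auto simp: U_def field_simps)
  have "(\<Union>m\<in>S. horizontal_segment (c m) 0 l) \<subseteq> (\<Union>i. U i)"
  proof
    fix x assume "x \<in> (\<Union>m\<in>S. horizontal_segment (c m) 0 l)"
    then obtain j t where j: "j < N" and t: "t \<in> {0..l}" and x: "x = c (h j) + (t, 0)"
      using h unfolding horizontal_segment_def bij_betw_def by auto
    obtain k where k: "k < K" "t \<in> {real k * l / real K..(real k + 1) * l / real K}"
      using mem_uniform_subinterval[OF t \<open>0 < l\<close> \<open>0 < K\<close>] .
    have "j * K + k < (j + 1) * K" using k(1) by simp
    also have "\<dots> \<le> N * K" using j by (intro mult_right_mono) auto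
    finally have "x \<in> U (j * K + k)"
      using k x by (auto simp: U_def horizontal_segment_def)
    then show "x \<in> (\<Union>i. U i)" by blast
  qed
  then have "hausdorff_pre1 (l / real K) (\<Union>m\<in>S. horizontal_segment (c m) 0 l)
      \<le> (\<Sum>i. ennreal (diameter (U i)))"
    by (rule hausdorff_pre1_le_cover[OF _ _ diam]) (simp add: U_def bounded_horizontal_segment)
  also have "\<dots> = (\<Sum>i<N * K. ennreal (diameter (U i)))"
    by (rule suminf_finite) (auto simp: U_def)
  also have "\<dots> \<le> (\<Sum>i<N * K. ennreal (l / real K))"
    by (intro sum_mono ennreal_leI diam)
  also have "\<dots> = ennreal (real (N * K)) * ennreal (l / real K)"
    by (simp only: sum_constant card_lessThan ennreal_of_nat_eq_real_of_nat)
  also have "\<dots> = ennreal (real (N * K) * (l / real K))"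
    by (rule ennreal_mult[symmetric]) (use \<open>0 < l\<close> in auto)
  also have "real (N * K) * (l / real K) = real (card S) * l"
    using \<open>0 < K\<close> by (simp add: N_def)
  finally show ?thesis .
qed

lemma H1_UN_horizontal_segments_le:
  assumes "finite S" "0 < l"
  shows "H1 (\<Union>m\<in>S. horizontal_segment (c m) 0 l) \<le> ennreal (real (card S) * l)"
proof (rule H1_least)
  fix d :: real assume "0 < d"
  obtain K :: nat where K: "l / d < real K" using reals_Archimedean2 by blast
  moreover have "0 < l / d" using \<open>0 < l\<close> \<open>0 < d\<close> by simp
  ultimately have "0 < real K" by linarith
  then have "l / real K \<le> d" using K \<open>0 < d\<close> by (simp add: field_simps)
  then show "hausdorff_pre1 d (\<Union>m\<in>S. horizontal_segment (c m) 0 l) \<le> ennreal (real (card S) * l)"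
    using hausdorff_pre1_UN_horizontal_segments_le[OF assms] \<open>0 < real K\<close>
    by (meson hausdorff_pre1_antimono of_nat_0_less_iff order_trans)
qed

definition piece_corner :: "nat \<Rightarrow> nat \<Rightarrow> real \<times> real" where
  "piece_corner n m = (real m / (real n)\<^sup>2, real (m mod n) / real n)"

definition piece :: "nat \<Rightarrow> nat \<Rightarrow> (real \<times> real) set" where
  "piece n m = horizontal_segment (piece_corner n m) 0 (1 / (real n)\<^sup>2)"

text \<open>Writing \<open>m = i * n + j\<close> with \<open>j < n\<close>, the piece \<open>m\<close> (column \<open>i\<close>, row \<open>j\<close>) lies at
  height \<open>j / n\<close> above \<open>[i / n + j / n\<^sup>2, i / n + (j + 1) / n\<^sup>2]\<close>: the set consists of \<open>n\<close>
  staircases of slope \<open>n\<close>.\<close>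
definition staircase :: "nat \<Rightarrow> (real \<times> real) set" where
  "staircase n = (\<Union>m<n\<^sup>2. piece n m)"

lemma mem_piece_iff:
  "x \<in> piece n m \<longleftrightarrow>
     (\<exists>s\<in>{0..1 / (real n)\<^sup>2}. x = (real m / (real n)\<^sup>2 + s, real (m mod n) / real n))"
  unfolding piece_def horizontal_segment_def piece_corner_def by auto

lemma compact_staircase: "compact (staircase n)"
  unfolding staircase_def piece_def horizontal_segment_def
  by (intro compact_UN compact_continuous_image continuous_intros) auto

lemma staircase_subset_unit_square:
  assumes "0 < n"
  shows "staircase n \<subseteq> cbox (0, 0) (1, 1)"
proof
  fix x assume "x \<in> staircase n"
  then obtain m where m: "m < n\<^sup>2" "x \<in> piece n m"
    unfolding staircase_def by auto
  then obtain s where s: "s \<in> {0..1 / (real n)\<^sup>2}"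
    and x: "x = (real m / (real n)\<^sup>2 + s, real (m mod n) / real n)"
    unfolding mem_piece_iff by auto
  have "real m + 1 \<le> (real n)\<^sup>2"
    using m(1) by (metis Suc_leI of_nat_Suc of_nat_le_iff of_nat_power add.commute)
  then have "real m / (real n)\<^sup>2 + s \<le> 1"
    using s assms by (simp add: field_simps)
  moreover have "real (m mod n) / real n \<le> 1"
    using assms by simp
  ultimately show "x \<in> cbox (0, 0) (1, 1)"
    using s x by (simp add: cbox_Pair_eq)
qed

lemma H1_staircase:
  assumes "0 < n"
  shows "H1 (staircase n) = 1"
proof (rule antisym)
  have "H1 (staircase n) \<le> ennreal (real (card {..<n\<^sup>2}) * (1 / (real n)\<^sup>2))"
    unfolding staircase_def piece_def by (rule H1_UN_horizontal_segments_le) (use assms in auto)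
  then show "H1 (staircase n) \<le> 1" using assms by simp
next
  have "{0..1} \<subseteq> fst ` staircase n"
  proof
    fix x :: real assume "x \<in> {0..1}"
    then obtain m where m: "m < n\<^sup>2" "x \<in> {real m * 1 / real (n\<^sup>2)..(real m + 1) * 1 / real (n\<^sup>2)}"
      using mem_uniform_subinterval[of x 1 "n\<^sup>2"] assms by auto
    then have "(x, real (m mod n) / real n) \<in> piece n m"
      unfolding mem_piece_iff
      by (intro bexI[of _ "x - real m / (real n)\<^sup>2"]) (auto simp: add_divide_distrib)
    then show "x \<in> fst ` staircase n" using m(1) unfolding staircase_def by force
  qed
  then have "H1 {0..1::real} \<le> H1 (fst ` staircase n)" by (rule H1_mono)
  also have "\<dots> \<le> H1 (staircase n)" by (rule H1_contraction_image_le) (rule dist_fst_le)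
  finally show "1 \<le> H1 (staircase n)"
    using emeasure_lborel_le_H1[of "{0..1::real}"] by simp
qed

lemma rectifiable_staircase: "rectifiable_set (staircase n)"
  unfolding rectifiable_set_def
proof (intro exI conjI)
  let ?row = "\<lambda>j t. (t, real j / real n) :: real \<times> real"
  show "\<forall>j. \<exists>L. lipschitz_on L UNIV (?row j)"
    by (intro allI exI[of _ 1] lipschitz_onI) (auto simp: dist_Pair_Pair)
  have "staircase n \<subseteq> (\<Union>j. range (?row j))"
    by (auto simp: staircase_def mem_piece_iff image_iff)
  then show "H1 (staircase n - (\<Union>j. range (?row j))) = 0"
    by (metis Diff_eq_empty_iff H1_empty)
qed

lemma mod_eq_imp_le_abs_diff:
  fixes m m' n :: nat
  assumes "m \<noteq> m'" "m mod n = m' mod n"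
  shows "real n \<le> \<bar>real m - real m'\<bar>"
proof -
  have "int n dvd int m - int m'"
    using assms(2) by (metis mod_eq_dvd_iff of_nat_mod)
  then have "\<bar>int n\<bar> \<le> \<bar>int m - int m'\<bar>"
    using assms(1) by (intro dvd_imp_le_int) auto
  then show ?thesis by linarith
qed

lemma dist_pieces_ge:
  assumes "2 \<le> n" "m \<noteq> m'" "x \<in> piece n m" "y \<in> piece n m'"
  shows "1 / (2 * real n) \<le> dist x y"
proof -
  obtain s s' where s: "s \<in> {0..1 / (real n)\<^sup>2}" "x = (real m / (real n)\<^sup>2 + s, real (m mod n) / real n)"
    and s': "s' \<in> {0..1 / (real n)\<^sup>2}" "y = (real m' / (real n)\<^sup>2 + s', real (m' mod n) / real n)"
    using assms(3,4) unfolding mem_piece_iff by blast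
  have n: "2 \<le> real n" using assms(1) by simp
  show ?thesis
  proof (cases "m mod n = m' mod n")
    case True
    have "real n / (real n)\<^sup>2 \<le> \<bar>real m - real m'\<bar> / (real n)\<^sup>2"
      using mod_eq_imp_le_abs_diff[OF assms(2) True] by (simp add: divide_right_mono)
    also have "\<dots> = \<bar>real m / (real n)\<^sup>2 - real m' / (real n)\<^sup>2\<bar>"
      by (simp add: diff_divide_distrib[symmetric] abs_divide)
    finally have "real n / (real n)\<^sup>2 \<le> \<bar>real m / (real n)\<^sup>2 - real m' / (real n)\<^sup>2\<bar>" .
    moreover have "1 / (2 * real n) \<le> real n / (real n)\<^sup>2 - 1 / (real n)\<^sup>2"
      using n by (simp add: field_simps power2_eq_square)
    ultimately have "1 / (2 * real n) \<le> \<bar>fst x - fst y\<bar>"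
      using s s' by auto
    then show ?thesis using dist_fst_le[of x y] by (simp add: dist_real_def)
  next
    case False
    then have "1 \<le> \<bar>real (m mod n) - real (m' mod n)\<bar>" by linarith
    then have "1 / real n \<le> \<bar>snd x - snd y\<bar>"
      using s s' n by (simp add: diff_divide_distrib[symmetric] abs_divide divide_right_mono)
    moreover have "1 / (2 * real n) \<le> 1 / real n" using n by (simp add: field_simps)
    ultimately show ?thesis using dist_snd_le[of x y] by (simp add: dist_real_def)
  qed
qed

lemma obtain_separated_points_staircase:
  assumes "2 \<le> n"
  obtains P where "finite P" "P \<subseteq> G \<inter> staircase n"
    "H1 (G \<inter> staircase n) \<le> ennreal (real (card P) / (real n)\<^sup>2)"
    "\<And>p q. p \<in> P \<Longrightarrow> q \<in> P \<Longrightarrow> p \<noteq> q \<Longrightarrow> 1 / (2 * real n) \<le> dist p q"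
proof -
  define K where "K = {m \<in> {..<n\<^sup>2}. G \<inter> piece n m \<noteq> {}}"
  have "\<forall>m\<in>K. \<exists>x. x \<in> G \<inter> piece n m" unfolding K_def by blast
  then obtain p where p: "\<And>m. m \<in> K \<Longrightarrow> p m \<in> G \<inter> piece n m"
    using bchoice by metis
  have far: "1 / (2 * real n) \<le> dist (p m) (p m')" if "m \<in> K" "m' \<in> K" "m \<noteq> m'" for m m'
    using dist_pieces_ge[OF assms that(3)] p that(1,2) by blast
  have "inj_on p K"
  proof (rule inj_onI, rule ccontr)
    fix m m' assume "m \<in> K" "m' \<in> K" "p m = p m'" "m \<noteq> m'"
    then show False using far[of m m'] assms by simp
  qed
  have "G \<inter> staircase n \<subseteq> (\<Union>m\<in>K. horizontal_segment (piece_corner n m) 0 (1 / (real n)\<^sup>2))"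
    unfolding K_def staircase_def piece_def by blast
  then have "H1 (G \<inter> staircase n) \<le> ennreal (real (card K) * (1 / (real n)\<^sup>2))"
    by (rule order_trans[OF H1_mono H1_UN_horizontal_segments_le]) (use assms in \<open>auto simp: K_def\<close>)
  moreover have "p ` K \<subseteq> G \<inter> staircase n"
    using p unfolding K_def staircase_def by blast
  ultimately show thesis
  proof (intro that[of "p ` K"])
    show "finite (p ` K)" by (simp add: K_def)
    show "1 / (2 * real n) \<le> dist x y" if "x \<in> p ` K" "y \<in> p ` K" "x \<noteq> y" for x y
      using that far by auto
  qed (simp_all add: card_image[OF \<open>inj_on p K\<close>])
qed

section \<open>Curves and Lipschitz graphs\<close>

lemma H1_connected_ge_card_separated:
  fixes S :: "'a::metric_space set"
  assumes "connected S" "finite P" "P \<subseteq> S" "2 \<le> card P" "0 < r"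
    and sep: "\<And>p q. p \<in> P \<Longrightarrow> q \<in> P \<Longrightarrow> p \<noteq> q \<Longrightarrow> 4 * r \<le> dist p q"
  shows "ennreal (real (card P) * r) \<le> H1 S"
proof -
  have ball: "ennreal r \<le> H1 (S \<inter> ball p r)" if "p \<in> P" for p
  proof -
    obtain q where "q \<in> P" "q \<noteq> p"
      using \<open>2 \<le> card P\<close> card_le_Suc0_iff_eq[OF \<open>finite P\<close>] that by fastforce
    then have "r \<le> dist p q" using sep[OF that] \<open>0 < r\<close> by force
    then show ?thesis
      using H1_connected_inter_ball \<open>connected S\<close> \<open>P \<subseteq> S\<close> \<open>p \<in> P\<close> \<open>q \<in> P\<close> \<open>0 < r\<close> by blast
  qed
  have "ennreal (real (card P) * r) = (\<Sum>p\<in>P. ennreal r)"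
    using \<open>0 < r\<close> by (simp add: ennreal_mult ennreal_of_nat_eq_real_of_nat)
  also have "\<dots> \<le> (\<Sum>p\<in>P. H1 (S \<inter> ball p r))" by (intro sum_mono ball)
  also have "\<dots> \<le> H1 (\<Union>p\<in>P. S \<inter> ball p r)"
  proof (rule H1_sum_separated[OF \<open>finite P\<close>, of "2 * r"])
    fix p q x y assume pq: "p \<in> P" "q \<in> P" "p \<noteq> q" and "x \<in> S \<inter> ball p r" "y \<in> S \<inter> ball q r"
    then have "dist p x < r" "dist y q < r" by (auto simp: dist_commute)
    moreover have "dist p q \<le> dist p x + dist x y + dist y q"
      using dist_triangle[of p q x] dist_triangle[of x q y] by linarith
    ultimately show "2 * r \<le> dist x y" using sep[OF pq] by linarith
  qed (use \<open>0 < r\<close> in simp)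
  also have "\<dots> \<le> H1 S" by (rule H1_mono) auto
  finally show ?thesis .
qed

lemma H1_curve_ge_of_inter_staircase:
  assumes "2 \<le> n" "2 / (real n)\<^sup>2 \<le> \<alpha>" "is_curve_set G" "ennreal \<alpha> \<le> H1 (G \<inter> staircase n)"
  shows "ennreal (1/8 * \<alpha> * real n) \<le> H1 G"
proof -
  obtain P where P: "finite P" "P \<subseteq> G \<inter> staircase n"
    and H1_le: "H1 (G \<inter> staircase n) \<le> ennreal (real (card P) / (real n)\<^sup>2)"
    and sep: "\<And>p q. p \<in> P \<Longrightarrow> q \<in> P \<Longrightarrow> p \<noteq> q \<Longrightarrow> 1 / (2 * real n) \<le> dist p q"
    using obtain_separated_points_staircase[OF \<open>2 \<le> n\<close>] by blast
  have n: "2 \<le> real n" using assms(1) by simp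
  have "\<alpha> \<le> real (card P) / (real n)\<^sup>2"
    using order_trans[OF assms(4) H1_le] by (subst (asm) ennreal_le_iff) auto
  then have card: "\<alpha> * (real n)\<^sup>2 \<le> real (card P)" using n by (simp add: field_simps)
  moreover have "2 \<le> \<alpha> * (real n)\<^sup>2" using assms(2) n by (simp add: field_simps)
  ultimately have "2 \<le> card P" by linarith
  have "connected G"
    using \<open>is_curve_set G\<close> connected_continuous_image connected_Icc
    unfolding is_curve_set_def by blast
  then have "ennreal (real (card P) * (1 / (8 * real n))) \<le> H1 G"
    by (rule H1_connected_ge_card_separated[OF _ P(1) _ \<open>2 \<le> card P\<close>])
      (use P(2) sep n in auto)
  moreover have "1/8 * \<alpha> * real n \<le> real (card P) * (1 / (8 * real n))"
    using card n by (simp add: field_simps power2_eq_square)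
  ultimately show ?thesis by (meson ennreal_leI order_trans)
qed

lemma card_separated_le:
  fixes t :: "'i \<Rightarrow> real"
  assumes "finite K" "0 < g" "a \<le> b"
    and range: "\<And>k. k \<in> K \<Longrightarrow> t k \<in> {a..b}"
    and sep: "\<And>k k'. k \<in> K \<Longrightarrow> k' \<in> K \<Longrightarrow> k \<noteq> k' \<Longrightarrow> g \<le> \<bar>t k - t k'\<bar>"
  shows "real (card K) \<le> (b - a) / g + 1"
proof -
  define slot where "slot k = nat \<lfloor>(t k - a) / g\<rfloor>" for k
  have "inj_on slot K"
  proof (rule inj_onI, rule ccontr)
    fix k k' assume k: "k \<in> K" "k' \<in> K" "slot k = slot k'" "k \<noteq> k'"
    moreover have "0 \<le> \<lfloor>(t k - a) / g\<rfloor>" "0 \<le> \<lfloor>(t k' - a) / g\<rfloor>"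
      using range k \<open>0 < g\<close> by auto
    ultimately have "\<lfloor>(t k - a) / g\<rfloor> = \<lfloor>(t k' - a) / g\<rfloor>"
      by (simp add: slot_def eq_nat_nat_iff)
    then have "\<bar>(t k - a) / g - (t k' - a) / g\<bar> < 1" by linarith
    then have "\<bar>t k - t k'\<bar> < g"
      using \<open>0 < g\<close> by (simp add: diff_divide_distrib[symmetric] abs_divide)
    with sep k show False by fastforce
  qed
  moreover have "slot ` K \<subseteq> {0..nat \<lfloor>(b - a) / g\<rfloor>}"
    using range \<open>0 < g\<close> by (auto simp: slot_def intro!: nat_mono floor_mono divide_right_mono)
  ultimately have "card K \<le> card {0..nat \<lfloor>(b - a) / g\<rfloor>}"
    by (intro card_inj_on_le) auto
  then have "real (card K) \<le> real (nat \<lfloor>(b - a) / g\<rfloor>) + 1" by simp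
  also have "real (nat \<lfloor>(b - a) / g\<rfloor>) \<le> (b - a) / g" using \<open>0 < g\<close> \<open>a \<le> b\<close> by simp
  finally show ?thesis by simp
qed

lemma lipschitz_graph_dist_le:
  assumes "lipschitz_graph M G"
  obtains u :: "real \<times> real" where "norm u = 1"
    "\<And>p q. p \<in> G \<Longrightarrow> q \<in> G \<Longrightarrow> dist p q \<le> (1 + M) * \<bar>inner p u - inner q u\<bar>"
proof -
  obtain u v A f where uv: "norm u = 1" "norm v = 1" "inner u v = 0" and f: "lipschitz_on M A f"
    and G: "G = (\<lambda>t. t *\<^sub>R u + f t *\<^sub>R v) ` A"
    using assms unfolding lipschitz_graph_def by blast
  have "inner u u = 1" "inner v u = 0" using uv by (simp_all add: norm_eq_1 inner_commute)
  then have inner_u: "inner (t *\<^sub>R u + s *\<^sub>R v) u = t" for t s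
    by (simp add: inner_add_left)
  have "dist (t *\<^sub>R u + f t *\<^sub>R v) (t' *\<^sub>R u + f t' *\<^sub>R v) \<le> (1 + M) * \<bar>t - t'\<bar>"
    if "t \<in> A" "t' \<in> A" for t t'
  proof -
    have "dist (t *\<^sub>R u + f t *\<^sub>R v) (t' *\<^sub>R u + f t' *\<^sub>R v) = norm ((t - t') *\<^sub>R u + (f t - f t') *\<^sub>R v)"
      by (simp add: dist_norm algebra_simps)
    also have "\<dots> \<le> \<bar>t - t'\<bar> + \<bar>f t - f t'\<bar>"
      using norm_triangle_ineq[of "(t - t') *\<^sub>R u" "(f t - f t') *\<^sub>R v"] uv by simp
    also have "\<bar>f t - f t'\<bar> \<le> M * \<bar>t - t'\<bar>"
      using lipschitz_onD[OF f that] by (simp add: dist_real_def)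
    finally show ?thesis by (simp add: algebra_simps)
  qed
  then show thesis
    by (intro that[OF uv(1)]) (auto simp: G inner_u)
qed

lemma card_separated_on_lipschitz_graph_le:
  assumes "lipschitz_graph M G" "finite P" "P \<subseteq> G" "0 < s" "0 \<le> R"
    and bounded: "\<And>p. p \<in> P \<Longrightarrow> norm p \<le> R"
    and sep: "\<And>p q. p \<in> P \<Longrightarrow> q \<in> P \<Longrightarrow> p \<noteq> q \<Longrightarrow> s \<le> dist p q"
  shows "real (card P) \<le> 2 * R * (1 + M) / s + 1"
proof -
  obtain u where u: "norm u = 1"
    and dist: "\<And>p q. p \<in> G \<Longrightarrow> q \<in> G \<Longrightarrow> dist p q \<le> (1 + M) * \<bar>inner p u - inner q u\<bar>"
    using lipschitz_graph_dist_le[OF assms(1)] by blast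
  have "0 \<le> M"
    using assms(1) unfolding lipschitz_graph_def by (auto intro: lipschitz_on_nonneg)
  have "real (card P) \<le> (R - - R) / (s / (1 + M)) + 1"
  proof (rule card_separated_le[OF \<open>finite P\<close>])
    show "inner p u \<in> {- R..R}" if "p \<in> P" for p
      using Cauchy_Schwarz_ineq2[of p u] bounded[OF that] u by auto
    show "s / (1 + M) \<le> \<bar>inner p u - inner q u\<bar>" if "p \<in> P" "q \<in> P" "p \<noteq> q" for p q
    proof -
      have "s \<le> (1 + M) * \<bar>inner p u - inner q u\<bar>"
        using sep[OF that] dist[of p q] that \<open>P \<subseteq> G\<close> by force
      then show ?thesis using \<open>0 \<le> M\<close> by (simp add: divide_le_eq mult.commute)
    qed
  qed (use \<open>0 < s\<close> \<open>0 \<le> M\<close> \<open>0 \<le> R\<close> in auto)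
  then show ?thesis by simp
qed

lemma norm_le_2_if_mem_unit_square:
  "p \<in> cbox (0, 0) (1, 1) \<Longrightarrow> norm (p :: real \<times> real) \<le> 2"
  using norm_Pair_le[of "fst p" "snd p"] by (auto simp: cbox_Pair_eq mem_Times_iff)

lemma H1_lipschitz_graph_inter_staircase_le:
  assumes "2 \<le> n" "1 \<le> M" "lipschitz_graph M G"
  shows "H1 (G \<inter> staircase n) \<le> ennreal (17 * M / real n)"
proof -
  obtain P where P: "finite P" "P \<subseteq> G \<inter> staircase n"
    and H1_le: "H1 (G \<inter> staircase n) \<le> ennreal (real (card P) / (real n)\<^sup>2)"
    and sep: "\<And>p q. p \<in> P \<Longrightarrow> q \<in> P \<Longrightarrow> p \<noteq> q \<Longrightarrow> 1 / (2 * real n) \<le> dist p q"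
    using obtain_separated_points_staircase[OF \<open>2 \<le> n\<close>] by blast
  have n: "2 \<le> real n" using assms(1) by simp
  have "real (card P) \<le> 2 * 2 * (1 + M) / (1 / (2 * real n)) + 1"
  proof (rule card_separated_on_lipschitz_graph_le[OF assms(3) P(1) _ _ _ _ sep])
    show "norm p \<le> 2" if "p \<in> P" for p
      using that P(2) staircase_subset_unit_square[of n] n by (intro norm_le_2_if_mem_unit_square) auto
  qed (use P(2) n in auto)
  also have "\<dots> = 8 * real n + 8 * (M * real n) + 1"
    using n by (simp add: field_simps)
  also have "\<dots> \<le> 17 * M * real n"
  proof -
    have "real n \<le> M * real n" using mult_right_mono[of 1 M "real n"] n assms(2) by simp
    then show ?thesis using n by (subst mult.assoc) linarith
  qed
  finally have "real (card P) / (real n)\<^sup>2 \<le> 17 * M / real n"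
    using n by (simp add: field_simps power2_eq_square)
  with H1_le show ?thesis by (meson ennreal_leI order_trans)
qed

section \<open>Favard length\<close>

definition favard_rows :: "nat \<Rightarrow> nat" where
  "favard_rows n = n div 24 + 1"

text \<open>A direction \<open>\<theta>\<close> is bad if \<open>\<bar>a n + b + b n tan \<theta>\<bar> \<le> 1\<close> for one of these pairs \<open>(b, a)\<close>.
  Outside the bad directions in \<open>[0, \<pi>/4]\<close>, the projections of two of the used pieces, whose rows
  differ by \<open>b\<close> and columns by \<open>a\<close>, are disjoint.\<close>
definition bad_directions :: "nat \<Rightarrow> real set" where
  "bad_directions n = (\<Union>(b, a)\<in>Sigma {1..<int (favard_rows n)} (\<lambda>b. {-b-1..0}).
     {arctan ((- (real_of_int a * real n + real_of_int b) - 1) / (real_of_int b * real n)) ..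
      arctan ((- (real_of_int a * real n + real_of_int b) + 1) / (real_of_int b * real n))})"

lemma arctan_diff_le:
  fixes x y :: real
  assumes "x \<le> y"
  shows "arctan y - arctan x \<le> y - x"
proof (cases "x = y")
  case False
  then have "x < y" using assms by simp
  then obtain z where "arctan y - arctan x = (y - x) * inverse (1 + z\<^sup>2)"
    using MVT2[of x y arctan "\<lambda>z. inverse (1 + z\<^sup>2)"] DERIV_arctan by blast
  moreover have "inverse (1 + z\<^sup>2) \<le> 1"
    by (simp add: inverse_le_1_iff)
  ultimately show ?thesis using \<open>x < y\<close> by (simp add: mult_left_le)
qed simp

lemma emeasure_bad_directions_le:
  assumes "2 \<le> n"
  shows "emeasure lborel (bad_directions n) \<le> ennreal (1/4)"
proof -
  define Q where "Q = Sigma {1..<int (favard_rows n)} (\<lambda>b. {-b-1..0})"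
  define lo where "lo b a = (- (real_of_int a * real n + real_of_int b) - 1) / (real_of_int b * real n)" for a b
  define hi where "hi b a = (- (real_of_int a * real n + real_of_int b) + 1) / (real_of_int b * real n)" for a b
  have n: "2 \<le> real n" using assms by simp
  have "finite Q" by (simp add: Q_def)
  have window: "emeasure lborel {arctan (lo b a)..arctan (hi b a)} \<le> ennreal (2 / (real_of_int b * real n))"
    if "(b, a) \<in> Q" for a b
  proof -
    have width: "hi b a - lo b a = 2 / (real_of_int b * real n)"
      by (simp add: lo_def hi_def diff_divide_distrib[symmetric])
    moreover have "0 < 2 / (real_of_int b * real n)" using that n by (simp add: Q_def)
    ultimately have le: "lo b a \<le> hi b a" by linarith
    then have "arctan (hi b a) - arctan (lo b a) \<le> 2 / (real_of_int b * real n)"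
      using arctan_diff_le[OF le] width by linarith
    with le show ?thesis by (simp add: arctan_le_iff ennreal_leI)
  qed
  have "emeasure lborel (bad_directions n) \<le> (\<Sum>(b, a)\<in>Q. emeasure lborel {arctan (lo b a)..arctan (hi b a)})"
    unfolding bad_directions_def Q_def[symmetric] lo_def[symmetric] hi_def[symmetric] split_beta
    by (rule emeasure_subadditive_finite[OF \<open>finite Q\<close>]) auto
  also have "\<dots> \<le> (\<Sum>(b, a)\<in>Q. ennreal (2 / (real_of_int b * real n)))"
    by (rule sum_mono) (use window in auto)
  also have "\<dots> = ennreal (\<Sum>(b, a)\<in>Q. 2 / (real_of_int b * real n))"
    unfolding split_beta by (rule sum_ennreal) (auto simp: Q_def)
  also have "(\<Sum>(b, a)\<in>Q. 2 / (real_of_int b * real n))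
      = (\<Sum>b\<in>{1..<int (favard_rows n)}. real_of_int (b + 2) * (2 / (real_of_int b * real n)))"
    unfolding Q_def by (subst sum.Sigma[symmetric]) (simp_all add: algebra_simps)
  also have "\<dots> \<le> (\<Sum>b\<in>{1..<int (favard_rows n)}. 6 / real n)"
  proof (rule sum_mono)
    fix b assume "b \<in> {1..<int (favard_rows n)}"
    then have "1 \<le> real_of_int b" by simp
    then show "real_of_int (b + 2) * (2 / (real_of_int b * real n)) \<le> 6 / real n"
      using n by (simp add: field_simps)
  qed
  also have "\<dots> \<le> 1/4"
    using n by (simp add: favard_rows_def field_simps)
  finally show ?thesis by (simp add: ennreal_leI)
qed

lemma tan_in_unit_interval: "\<theta> \<in> {0..pi/4} \<Longrightarrow> tan \<theta> \<in> {0..1}"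
  using tan_mono_le[of 0 \<theta>] tan_mono_le[of \<theta> "pi/4"] pi_gt3 by (auto simp: tan_45)

lemma good_direction_separation_pos:
  fixes a b :: int
  assumes "2 \<le> n" "\<theta> \<in> {0..pi/4} - bad_directions n" "0 < b" "b < int (favard_rows n)"
  shows "1 \<le> \<bar>real_of_int a * real n + real_of_int b + real_of_int b * real n * tan \<theta>\<bar>"
proof (rule ccontr)
  let ?a = "real_of_int a" and ?b = "real_of_int b"
  assume "\<not> ?thesis"
  then have close: "\<bar>?a * real n + ?b + ?b * real n * tan \<theta>\<bar> < 1" by simp
  have n: "2 \<le> real n" using assms(1) by simp
  have "b + 1 \<le> int n" using assms(1,4) by (simp add: favard_rows_def)
  then have b: "1 \<le> ?b" "?b + 1 \<le> real n" using assms(3) by linarith+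
  have "0 \<le> tan \<theta>" "tan \<theta> \<le> 1" using tan_in_unit_interval assms(2) by auto
  then have bt: "0 \<le> ?b * real n * tan \<theta>" "?b * real n * tan \<theta> \<le> ?b * real n"
    using b n by (simp_all add: mult_left_le)
  have "a \<le> 0"
  proof (rule ccontr)
    assume "\<not> a \<le> 0"
    then have "real n \<le> ?a * real n" using n by simp
    then show False using close bt b by linarith
  qed
  moreover have "- b - 1 \<le> a"
  proof (rule ccontr)
    assume "\<not> - b - 1 \<le> a"
    then have "?a * real n \<le> (- ?b - 2) * real n" using n by (intro mult_right_mono) linarith+
    then show False using close bt b by (simp add: algebra_simps)
  qed
  ultimately have pair: "(b, a) \<in> Sigma {1..<int (favard_rows n)} (\<lambda>b. {-b-1..0})"
    using assms(3,4) by auto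
  let ?lo = "(- (?a * real n + ?b) - 1) / (?b * real n)"
  let ?hi = "(- (?a * real n + ?b) + 1) / (?b * real n)"
  have "0 < ?b * real n" using b n by simp
  then have "?lo < tan \<theta>" "tan \<theta> < ?hi"
    using close by (simp_all add: divide_less_eq less_divide_eq abs_less_iff algebra_simps)
  moreover have "arctan (tan \<theta>) = \<theta>"
    using assms(2) pi_gt3 by (intro arctan_tan) auto
  ultimately have "arctan ?lo \<le> \<theta>" "\<theta> \<le> arctan ?hi"
    by (metis arctan_less_iff less_imp_le)+
  then have "\<theta> \<in> bad_directions n" using pair unfolding bad_directions_def by fastforce
  then show False using assms(2) by simp
qed

lemma good_direction_separation:
  fixes a b :: int
  assumes "2 \<le> n" "\<theta> \<in> {0..pi/4} - bad_directions n" "(a, b) \<noteq> (0, 0)" "\<bar>b\<bar> < int (favard_rows n)"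
  shows "1 \<le> \<bar>real_of_int a * real n + real_of_int b + real_of_int b * real n * tan \<theta>\<bar>"
proof -
  consider "b = 0" | "0 < b" | "b < 0" by linarith
  then show ?thesis
  proof cases
    case 1
    then have "1 \<le> \<bar>real_of_int a\<bar>" using assms(3) by auto
    then have "1 \<le> \<bar>real_of_int a\<bar> * real n"
      using mult_mono[of 1 "\<bar>real_of_int a\<bar>" 1 "real n"] assms(1) by simp
    then show ?thesis using 1 by (simp add: abs_mult)
  next
    case 2
    then show ?thesis using good_direction_separation_pos assms by simp
  next
    case 3
    then have "1 \<le> \<bar>real_of_int (- a) * real n + real_of_int (- b) + real_of_int (- b) * real n * tan \<theta>\<bar>"
      using good_direction_separation_pos[of n \<theta> "- b" "- a"] assms by simp
    then show ?thesis by (simp add: abs_minus_commute algebra_simps)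
  qed
qed

lemma proj_horizontal_segment:
  assumes "0 \<le> cos \<theta>" "0 \<le> l"
  shows "proj \<theta> ` horizontal_segment c 0 l = {proj \<theta> c .. proj \<theta> c + l * cos \<theta>}"
proof -
  have "proj \<theta> ` horizontal_segment c 0 l = (\<lambda>t. cos \<theta> * t + proj \<theta> c) ` {0..l}"
    unfolding horizontal_segment_def image_image by (rule image_cong) (auto simp: proj_def algebra_simps)
  then show ?thesis using assms by (simp only: image_affinity_atLeastAtMost) (auto simp: mult.commute)
qed

lemma cos_ge_half: "\<theta> \<in> {0..pi/4} \<Longrightarrow> 1/2 \<le> cos \<theta>"
  using cos_monotone_0_pi_le[of \<theta> "pi/3"] pi_gt_zero by (auto simp: cos_60)

lemma proj_piece_corner:
  assumes "j < n" "cos \<theta> \<noteq> 0"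
  shows "proj \<theta> (piece_corner n (i * n + j))
    = cos \<theta> / (real n)\<^sup>2 * (real i * real n + real j + real j * real n * tan \<theta>)"
  using assms by (simp add: proj_def piece_corner_def tan_def field_simps power2_eq_square)

lemma good_direction_proj_piece_corners_apart:
  assumes "2 \<le> n" "\<theta> \<in> {0..pi/4} - bad_directions n" "(i, j) \<noteq> (i', j')"
    "j < favard_rows n" "j' < favard_rows n"
  shows "cos \<theta> / (real n)\<^sup>2
    \<le> \<bar>proj \<theta> (piece_corner n (i * n + j)) - proj \<theta> (piece_corner n (i' * n + j'))\<bar>"
proof -
  define X where "X = real_of_int (int i - int i') * real n + real_of_int (int j - int j')
    + real_of_int (int j - int j') * real n * tan \<theta>"
  define w where "w = cos \<theta> / (real n)\<^sup>2"
  have "0 < cos \<theta>" using cos_ge_half assms(2) by fastforce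
  have "favard_rows n \<le> n" using assms(1) by (simp add: favard_rows_def)
  then have "j < n" "j' < n" using assms(4,5) by linarith+
  then have "proj \<theta> (piece_corner n (i * n + j)) - proj \<theta> (piece_corner n (i' * n + j')) = w * X"
    using \<open>0 < cos \<theta>\<close> unfolding X_def w_def by (simp only: proj_piece_corner) (simp add: algebra_simps)
  moreover have "1 \<le> \<bar>X\<bar>"
    unfolding X_def using assms by (intro good_direction_separation) auto
  then have "w * 1 \<le> w * \<bar>X\<bar>"
    using \<open>0 < cos \<theta>\<close> by (intro mult_left_mono) (auto simp: w_def)
  ultimately show ?thesis
    using \<open>0 < cos \<theta>\<close> by (simp add: abs_mult w_def)
qed

lemma emeasure_UN_separated_intervals:
  fixes x :: "'i \<Rightarrow> real"
  assumes "finite I" "0 \<le> w" "\<And>p q. p \<in> I \<Longrightarrow> q \<in> I \<Longrightarrow> p \<noteq> q \<Longrightarrow> w \<le> \<bar>x p - x q\<bar>"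
  shows "emeasure lborel (\<Union>p\<in>I. {x p..<x p + w}) = ennreal (real (card I) * w)"
proof -
  have "disjoint_family_on (\<lambda>p. {x p..<x p + w}) I"
    unfolding disjoint_family_on_def using assms(3) by fastforce
  then have "emeasure lborel (\<Union>p\<in>I. {x p..<x p + w}) = (\<Sum>p\<in>I. emeasure lborel {x p..<x p + w})"
    by (intro sum_emeasure[symmetric]) (auto simp: \<open>finite I\<close>)
  also have "\<dots> = ennreal (real (card I) * w)"
    using \<open>0 \<le> w\<close> by (simp add: ennreal_of_nat_eq_real_of_nat ennreal_mult)
  finally show ?thesis .
qed

lemma H1_proj_staircase_ge:
  assumes "2 \<le> n" "\<theta> \<in> {0..pi/4} - bad_directions n"
  shows "ennreal (1/48) \<le> H1 (proj \<theta> ` staircase n)"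
proof -
  have n: "2 \<le> real n" using assms(1) by simp
  have cos: "1/2 \<le> cos \<theta>" using cos_ge_half assms(2) by blast
  define w where "w = cos \<theta> / (real n)\<^sup>2"
  have "0 < w" using cos n by (simp add: w_def)
  define start where "start p = proj \<theta> (piece_corner n (fst p * n + snd p))" for p
  define I where "I = {..<n} \<times> {..<favard_rows n}"
  have sub: "{start p..<start p + w} \<subseteq> proj \<theta> ` staircase n" if "p \<in> I" for p
  proof -
    obtain i j where p: "p = (i, j)" "i < n" "j < n"
      using \<open>p \<in> I\<close> assms(1) by (auto simp: I_def favard_rows_def)
    have "i * n + j < (i + 1) * n" using p by simp
    also have "\<dots> \<le> n * n" using p(2) by (intro mult_right_mono) auto
    also have "\<dots> = n\<^sup>2" by (simp add: power2_eq_square)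
    finally have "piece n (i * n + j) \<subseteq> staircase n" unfolding staircase_def by blast
    moreover have "{start p..<start p + w} \<subseteq> proj \<theta> ` piece n (i * n + j)"
      unfolding piece_def using cos n
      by (subst proj_horizontal_segment) (auto simp: start_def w_def p)
    ultimately show ?thesis by blast
  qed
  have "w \<le> \<bar>start p - start q\<bar>" if "p \<in> I" "q \<in> I" "p \<noteq> q" for p q
    using that unfolding w_def start_def I_def
    by (intro good_direction_proj_piece_corners_apart[OF assms]) (auto simp: prod_eq_iff)
  then have measure: "emeasure lborel (\<Union>p\<in>I. {start p..<start p + w}) = ennreal (real (card I) * w)"
    using \<open>0 < w\<close> by (intro emeasure_UN_separated_intervals) (auto simp: I_def)
  have "n \<le> 24 * favard_rows n"
    unfolding favard_rows_def by presburger
  then have "real n \<le> 24 * real (favard_rows n)"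
    by (metis of_nat_le_iff of_nat_mult of_nat_numeral)
  then have "1/48 \<le> real (favard_rows n) * (1/2) / real n" using n by (simp add: field_simps)
  also have "\<dots> \<le> real (favard_rows n) * cos \<theta> / real n"
    using cos n by (intro divide_right_mono mult_left_mono) auto
  also have "\<dots> = real (card I) * w"
    using n by (simp add: I_def w_def power2_eq_square card_cartesian_product)
  finally have "ennreal (1/48) \<le> emeasure lborel (\<Union>p\<in>I. {start p..<start p + w})"
    unfolding measure by (rule ennreal_leI)
  also have "\<dots> \<le> H1 (\<Union>p\<in>I. {start p..<start p + w})" by (rule emeasure_lborel_le_H1)
  also have "\<dots> \<le> H1 (proj \<theta> ` staircase n)" by (rule H1_mono) (use sub in blast)
  finally show ?thesis .
qed

lemma Fav_staircase_ge:
  assumes "2 \<le> n"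
  shows "ennreal (1/96) \<le> Fav (staircase n)"
proof -
  let ?good = "{0..pi/4} - bad_directions n"
  have bad: "bad_directions n \<in> sets lborel"
    unfolding bad_directions_def by (intro sets.finite_UN) (auto simp: split_beta)
  then have good: "?good \<in> sets lborel" by auto
  have "ennreal (pi/4) = emeasure lborel {0..pi/4}" using pi_gt_zero by simp
  also have "\<dots> \<le> emeasure lborel (?good \<union> bad_directions n)"
    by (rule emeasure_mono) (use bad in auto)
  also have "\<dots> \<le> emeasure lborel ?good + emeasure lborel (bad_directions n)"
    by (rule emeasure_subadditive[OF good bad])
  also have "\<dots> \<le> emeasure lborel ?good + ennreal (1/4)"
    by (rule add_left_mono[OF emeasure_bad_directions_le[OF assms]])
  finally have "ennreal (pi/4) - ennreal (1/4) \<le> emeasure lborel ?good"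
    by (simp add: ennreal_minus_le_iff add.commute)
  moreover have "ennreal (pi/4) - ennreal (1/4) = ennreal (pi/4 - 1/4)"
    by (rule ennreal_minus) simp
  moreover have "ennreal (1/2) \<le> ennreal (pi/4 - 1/4)"
    using pi_gt3 by (intro ennreal_leI) linarith
  ultimately have good_measure: "ennreal (1/2) \<le> emeasure lborel ?good" by simp
  have "ennreal (1/96) = ennreal (1/48) * ennreal (1/2)"
    by (subst ennreal_mult[symmetric]) auto
  also have "\<dots> \<le> ennreal (1/48) * emeasure lborel ?good"
    by (rule mult_left_mono[OF good_measure]) simp
  also have "\<dots> = (\<integral>\<^sup>+ t. ennreal (1/48) * indicator ?good t \<partial>lborel)"
    by (rule nn_integral_cmult_indicator[symmetric, OF good])
  also have "\<dots> \<le> (\<integral>\<^sup>+ t \<in> {0..<pi}. H1 (proj t ` staircase n) \<partial>lborel)"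
  proof (rule nn_integral_mono)
    fix t
    have "t \<in> ?good \<Longrightarrow> t \<in> {0..<pi}" using pi_gt_zero by (auto; linarith)
    then show "ennreal (1/48) * indicator ?good t \<le> H1 (proj t ` staircase n) * indicator {0..<pi} t"
      using H1_proj_staircase_ge[OF assms, of t] by (auto simp: indicator_def)
  qed
  finally show ?thesis unfolding Fav_def .
qed

theorem proposition6p1:
  shows "\<exists>(\<delta>::real) (c::real) (C::real) (E :: nat \<Rightarrow> (real \<times> real) set).
     \<delta> > 0 \<and> c > 0 \<and>
     (\<forall>n\<ge>2.
        compact (E n) \<and> rectifiable_set (E n) \<and> E n \<subseteq> cbox (0,0) (1,1) \<and>
        H1 (E n) = 1 \<and>
        ennreal \<delta> \<le> Fav (E n) \<and>
        (\<forall>\<alpha> G. 2 / (real n)\<^sup>2 \<le> \<alpha> \<and> \<alpha> < 1 \<and> is_curve_set G \<and> ennreal \<alpha> \<le> H1 (G \<inter> E n)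
            \<longrightarrow> ennreal (c * \<alpha> * real n) \<le> H1 G) \<and>
        (\<forall>M G. M \<ge> 1 \<and> lipschitz_graph M G \<longrightarrow> H1 (G \<inter> E n) \<le> ennreal (C * M / real n)))"
  using compact_staircase rectifiable_staircase staircase_subset_unit_square H1_staircase
    Fav_staircase_ge H1_curve_ge_of_inter_staircase H1_lipschitz_graph_inter_staircase_le
  by (intro exI[of _ "1/96"] exI[of _ "1/8"] exI[of _ 17] exI[of _ staircase]) auto

end
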